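(* Let $0<\delta<1$ and let $Z=(Z_1,\dots,Z_k)$ be, given the database $X=(X_1,\dots,X_n)$, $k$ i.i.d. draws from the smoothed histogram density $\hat f_{m,\delta}(x)=(1-\delta)\hat f_m(x)+\delta$ on $[0,1]^r$. If $$k\log\Big(\frac{(1-\delta)m}{n\delta}+1\Big)\le\alpha,$$ then the resulting mechanism $Q_n(\cdot\mid X)$ satisfies $\alpha$-differential privacy.
   Context: Let $r\ge 1$ and $\mathcal X=[0,1]^r$. A database is $x=(x_1,\dots,x_n)\in\mathcal X^n$; the Hamming distance is $\delta(x,y)=\#\{i:x_i\ne y_i\}$. A data release mechanism is a Markov kernel $Q_n(\cdot\mid X=x)$ on $\mathcal X^k$; for $\alpha\ge0$ it satisfies $\alpha$-differential privacy if $Q_n(B\mid X=x)\le e^{\alpha}Q_n(B\mid X=y)$ for all measurable $B\subseteq\mathcal X^k$ and all $x,y$ with $\delta(x,y)=1$. Histogram: let $0<h<1$ be a binwidth with $m=h^{-r}$ an integer, and partition $[0,1]^r$ into $m$ cubes $B_1,\dots,B_m$ of side $h$. Let $C_j=\sum_{i=1}^n I(X_i\in B_j)$, $\hat p_j=C_j/n$, and $\hat f_m(x)=\sum_{j=1}^m (\hat p_j/h^r)I(x\in B_j)$. *)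

theory Defs
  imports "HOL-Probability.Probability"
begin

text \<open>The binwidth is h = 1/N for an integer N \<ge> 2 (so that [0,1]^r is partitioned
  into m = N^r cubes of side h).  Databases are functions nat \<Rightarrow> real^'r, of which
  only the entries with index i < n matter.\<close>

definition unit_cube :: "(real ^ 'r) set" where
  "unit_cube = cbox 0 One"

text \<open>Index of the bin containing z: the j-th coordinate of the bin index is
  floor(N z_j), clipped to N-1 so that the point 1 belongs to the last bin.\<close>
definition bin_index :: "nat \<Rightarrow> real ^ 'r \<Rightarrow> ('r \<Rightarrow> nat)" where
  "bin_index N z = (\<lambda>j. min (N - 1) (nat \<lfloor>z $ j * real N\<rfloor>))"

definition hist_count :: "nat \<Rightarrow> nat \<Rightarrow> (nat \<Rightarrow> real ^ 'r) \<Rightarrow> real ^ 'r \<Rightarrow> nat" where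
  "hist_count N n x z = card {i \<in> {..<n}. bin_index N (x i) = bin_index N z}"

definition hist_density :: "nat \<Rightarrow> nat \<Rightarrow> (nat \<Rightarrow> real ^ 'r) \<Rightarrow> real ^ 'r \<Rightarrow> real" where
  "hist_density N n x z =
     (if z \<in> unit_cube then (real (hist_count N n x z) / real n) / (1 / real N) ^ CARD('r) else 0)"

definition smoothed_hist_density ::
    "real \<Rightarrow> nat \<Rightarrow> nat \<Rightarrow> (nat \<Rightarrow> real ^ 'r) \<Rightarrow> real ^ 'r \<Rightarrow> real" where
  "smoothed_hist_density \<delta> N n x z =
     (if z \<in> unit_cube then (1 - \<delta>) * hist_density N n x z + \<delta> else 0)"

definition hist_mechanism ::
    "real \<Rightarrow> nat \<Rightarrow> nat \<Rightarrow> nat \<Rightarrow> (nat \<Rightarrow> real ^ 'r) \<Rightarrow> (nat \<Rightarrow> real ^ 'r) measure" where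
  "hist_mechanism \<delta> N n k x =
     PiM {..<k} (\<lambda>_. density lborel (\<lambda>z. ennreal (smoothed_hist_density \<delta> N n x z)))"

definition hamming :: "nat \<Rightarrow> (nat \<Rightarrow> 'a) \<Rightarrow> (nat \<Rightarrow> 'a) \<Rightarrow> nat" where
  "hamming n x y = card {i \<in> {..<n}. x i \<noteq> y i}"

definition differentially_private ::
    "real \<Rightarrow> nat \<Rightarrow> ((nat \<Rightarrow> real ^ 'r) \<Rightarrow> 'b measure) \<Rightarrow> bool" where
  "differentially_private \<alpha> n Q \<longleftrightarrow>
     (\<forall>x y. (\<forall>i<n. x i \<in> unit_cube) \<longrightarrow> (\<forall>i<n. y i \<in> unit_cube) \<longrightarrow> hamming n x y = 1 \<longrightarrow>
        (\<forall>B \<in> sets (Q x). measure (Q x) B \<le> exp \<alpha> * measure (Q y) B))"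

end

theory Submission
  imports Defs
begin

(* Changing one
   record moves at most one point between two cells, so every cell count changes by
   at most 1; since s_x = a * C + \<delta> on a cell with count C (a = (1-\<delta>) m / n),
   this gives the pointwise likelihood-ratio bound  s_x \<le> L * s_y  with
   L = (1-\<delta>) m / (n \<delta>) + 1.  For product measures the bound tensorises:
   the k-fold product of density s_x has density  \<Prod>i s_x(\<omega>_i) \<le> L^k \<Prod>i s_y(\<omega>_i),
   hence  Q_x(B) \<le> L^k Q_y(B) = exp (k ln L) Q_y(B) \<le> e^\<alpha> Q_y(B). *)

(* The product of finitely many copies of a density measure f M is the density
   measure over the product of M with product density; both sides agree on
   measurable rectangles by Tonelli, which determines a product measure. *)
lemma PiM_density:
  fixes f :: "'a \<Rightarrow> ennreal"
  assumes sM: "sigma_finite_measure M" and [measurable]: "f \<in> borel_measurable M" and I: "finite I"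
    and sD: "sigma_finite_measure (density M f)"
  shows "PiM I (\<lambda>_. density M f) = density (PiM I (\<lambda>_. M)) (\<lambda>\<omega>. \<Prod>i\<in>I. f (\<omega> i))"
proof -
  interpret A: product_sigma_finite "\<lambda>_. M" by (simp add: product_sigma_finite_def sM)
  interpret B: product_sigma_finite "\<lambda>_. density M f" by (simp add: product_sigma_finite_def sD)
  have sets_eq: "sets (PiM I (\<lambda>_. density M f)) = sets (PiM I (\<lambda>_. M))"
    by (rule sets_PiM_cong) auto
  show ?thesis
  proof (rule B.PiM_eqI[symmetric, OF I])
    show "sets (density (PiM I (\<lambda>_. M)) (\<lambda>\<omega>. \<Prod>i\<in>I. f (\<omega> i))) = sets (PiM I (\<lambda>_. density M f))"
      using sets_eq by simp
  next
    fix A assume A: "\<And>i. i \<in> I \<Longrightarrow> A i \<in> sets (density M f)"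
    then have A_M: "\<And>i. i \<in> I \<Longrightarrow> A i \<in> sets M" by simp
    have PA: "Pi\<^sub>E I A \<in> sets (PiM I (\<lambda>_. M))"
      using A_M by (intro sets_PiM_I_finite I) auto
    have "emeasure (density (PiM I (\<lambda>_. M)) (\<lambda>\<omega>. \<Prod>i\<in>I. f (\<omega> i))) (Pi\<^sub>E I A)
        = (\<integral>\<^sup>+\<omega>. (\<Prod>i\<in>I. f (\<omega> i)) * indicator (Pi\<^sub>E I A) \<omega> \<partial>PiM I (\<lambda>_. M))"
      using PA by (subst emeasure_density) auto
    also have "\<dots> = (\<integral>\<^sup>+\<omega>. (\<Prod>i\<in>I. f (\<omega> i) * indicator (A i) (\<omega> i)) \<partial>PiM I (\<lambda>_. M))"
    proof (rule nn_integral_cong)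
      fix \<omega> assume "\<omega> \<in> space (PiM I (\<lambda>_. M))"
      then have ext: "\<omega> \<in> extensional I" by (auto simp: space_PiM PiE_def)
      have "indicator (Pi\<^sub>E I A) \<omega> = (\<Prod>i\<in>I. indicator (A i) (\<omega> i) :: ennreal)"
        using ext I by (auto simp: indicator_def PiE_def Pi_def extensional_def)
      then show "(\<Prod>i\<in>I. f (\<omega> i)) * indicator (Pi\<^sub>E I A) \<omega> = (\<Prod>i\<in>I. f (\<omega> i) * indicator (A i) (\<omega> i))"
        by (simp add: prod.distrib)
    qed
    also have "\<dots> = (\<Prod>i\<in>I. \<integral>\<^sup>+z. f z * indicator (A i) z \<partial>M)"
      using A_M by (intro A.product_nn_integral_prod I) auto
    also have "\<dots> = (\<Prod>i\<in>I. emeasure (density M f) (A i))"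
      using A_M by (intro prod.cong refl) (simp add: emeasure_density)
    finally show "emeasure (density (PiM I (\<lambda>_. M)) (\<lambda>\<omega>. \<Prod>i\<in>I. f (\<omega> i))) (Pi\<^sub>E I A) = (\<Prod>i\<in>I. emeasure (density M f) (A i))" .
  qed
qed

lemma finite_measure_PiM_power:
  assumes "finite_measure M" and "finite I"
  shows "finite_measure (PiM I (\<lambda>_. M))"
proof
  interpret M: finite_measure M by (fact assms(1))
  interpret P: product_sigma_finite "\<lambda>_. M"
    by (simp add: product_sigma_finite_def M.sigma_finite_measure_axioms)
  have "emeasure (PiM I (\<lambda>_. M)) (space (PiM I (\<lambda>_. M))) = (\<Prod>i\<in>I. emeasure M (space M))"
    unfolding space_PiM by (rule P.emeasure_PiM[OF assms(2)]) simp
  then show "emeasure (PiM I (\<lambda>_. M)) (space (PiM I (\<lambda>_. M))) \<noteq> \<infinity>"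
    using M.emeasure_finite[of "space M"] by (simp add: power_eq_top_ennreal)
qed

lemma emeasure_density_le_scaled:
  assumes [measurable]: "f \<in> borel_measurable M" "g \<in> borel_measurable M" "A \<in> sets M"
    and le: "\<And>x. x \<in> space M \<Longrightarrow> f x \<le> c * g x"
  shows "emeasure (density M f) A \<le> c * emeasure (density M g) A"
proof -
  have "emeasure (density M f) A = (\<integral>\<^sup>+x. f x * indicator A x \<partial>M)"
    by (simp add: emeasure_density)
  also have "\<dots> \<le> (\<integral>\<^sup>+x. c * (g x * indicator A x) \<partial>M)"
    using le by (intro nn_integral_mono) (auto simp: indicator_def)
  also have "\<dots> = c * emeasure (density M g) A"
    by (simp add: nn_integral_cmult emeasure_density)
  finally show ?thesis .
qed

(* Finiteness of the g-product is needed to pass from emeasure to measure. *)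
lemma measure_PiM_density_le:
  fixes f g :: "'a \<Rightarrow> real"
  assumes M: "sigma_finite_measure M"
    and [measurable]: "f \<in> borel_measurable M" "g \<in> borel_measurable M"
    and f0: "\<And>z. 0 \<le> f z" and g0: "\<And>z. 0 \<le> g z"
    and sf_f: "sigma_finite_measure (density M f)" and fin_g: "finite_measure (density M g)"
    and ratio: "\<And>z. f z \<le> L * g z" and L0: "0 \<le> L"
    and I: "finite I" and B: "B \<in> sets (PiM I (\<lambda>_. density M f))"
  shows "measure (PiM I (\<lambda>_. density M f)) B \<le> L ^ card I * measure (PiM I (\<lambda>_. density M g)) B"
proof -
  let ?Qf = "PiM I (\<lambda>_. density M f)" and ?Qg = "PiM I (\<lambda>_. density M g)"
  have Qf: "?Qf = density (PiM I (\<lambda>_. M)) (\<lambda>\<omega>. \<Prod>i\<in>I. ennreal (f (\<omega> i)))"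
    using PiM_density[OF M _ I sf_f] by simp
  have Qg: "?Qg = density (PiM I (\<lambda>_. M)) (\<lambda>\<omega>. \<Prod>i\<in>I. ennreal (g (\<omega> i)))"
    using PiM_density[OF M _ I finite_measure.axioms(1)[OF fin_g]] by simp
  have B_sets: "B \<in> sets (PiM I (\<lambda>_. M))"
    using B by (simp add: Qf)
  have prod_le: "(\<Prod>i\<in>I. ennreal (f (\<omega> i))) \<le> ennreal (L ^ card I) * (\<Prod>i\<in>I. ennreal (g (\<omega> i)))"
    for \<omega> :: "'b \<Rightarrow> 'a"
  proof -
    have "(\<Prod>i\<in>I. f (\<omega> i)) \<le> (\<Prod>i\<in>I. L * g (\<omega> i))"
      using f0 ratio by (intro prod_mono) auto
    also have "\<dots> = L ^ card I * (\<Prod>i\<in>I. g (\<omega> i))"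
      by (simp add: prod.distrib)
    finally show ?thesis
      using f0 g0 L0 by (simp add: prod_ennreal ennreal_mult[symmetric] prod_nonneg ennreal_leI)
  qed
  have "emeasure ?Qf B \<le> ennreal (L ^ card I) * emeasure ?Qg B"
    unfolding Qf Qg by (rule emeasure_density_le_scaled[OF _ _ B_sets prod_le]) measurable
  moreover have "emeasure ?Qg B \<noteq> \<infinity>"
    using finite_measure.emeasure_finite[OF finite_measure_PiM_power[OF fin_g I]] by simp
  ultimately have "measure ?Qf B \<le> enn2real (ennreal (L ^ card I) * emeasure ?Qg B)"
    unfolding measure_def by (intro enn2real_mono) (simp_all add: ennreal_mult_less_top top.not_eq_extremum)
  also have "\<dots> = L ^ card I * measure ?Qg B"
    using L0 by (simp add: enn2real_mult measure_def)
  finally show ?thesis .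
qed

lemma bin_index_measurable[measurable]:
  "Measurable.pred borel (\<lambda>z::real^'r. b = bin_index N z)"
  unfolding bin_index_def fun_eq_iff by measurable

lemma hist_count_eq_sum:
  "real (hist_count N n x z) = (\<Sum>i<n. if bin_index N (x i) = bin_index N z then 1 else 0)"
  unfolding hist_count_def by (simp add: sum.If_cases Int_def)

lemma smoothed_hist_density_measurable[measurable]:
  "(\<lambda>z::real^'r. smoothed_hist_density \<delta> N n x z) \<in> borel_measurable borel"
  unfolding smoothed_hist_density_def hist_density_def hist_count_eq_sum unit_cube_def
  by measurable

lemma hist_count_le: "hist_count N n x z \<le> n"
  unfolding hist_count_def by (rule order_trans[OF card_mono card_lessThan[THEN eq_imp_le]]) auto

(* Sensitivity of the histogram: on neighbouring databases every cell count
   changes by at most one, since the cells of x are covered by those of y plus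
   the single differing record. *)
lemma hist_count_neighbour:
  assumes "hamming n x y = 1"
  shows "hist_count N n x z \<le> hist_count N n y z + 1"
proof -
  have "{i \<in> {..<n}. bin_index N (x i) = bin_index N z} \<subseteq>
        {i \<in> {..<n}. bin_index N (y i) = bin_index N z} \<union> {i \<in> {..<n}. x i \<noteq> y i}"
    by auto
  then have "hist_count N n x z
      \<le> card ({i \<in> {..<n}. bin_index N (y i) = bin_index N z} \<union> {i \<in> {..<n}. x i \<noteq> y i})"
    unfolding hist_count_def by (intro card_mono) auto
  also have "\<dots> \<le> hist_count N n y z + hamming n x y"
    unfolding hist_count_def hamming_def by (rule card_Un_le)
  finally show ?thesis using assms by simp
qed

lemma smoothed_hist_density_on_cube:
  fixes z :: "real ^ 'r" and x :: "nat \<Rightarrow> real ^ 'r"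
  assumes "z \<in> unit_cube" and "N \<ge> 1"
  shows "smoothed_hist_density \<delta> N n x z
           = (1 - \<delta>) * real (N ^ CARD('r)) / real n * real (hist_count N n x z) + \<delta>"
  using assms unfolding smoothed_hist_density_def hist_density_def
  by (simp add: power_one_over field_simps)

lemma smoothed_hist_density_nonneg:
  fixes z :: "real ^ 'r" and x :: "nat \<Rightarrow> real ^ 'r"
  assumes "0 < \<delta>" and "\<delta> < 1" and "N \<ge> 1"
  shows "0 \<le> smoothed_hist_density \<delta> N n x z"
proof (cases "z \<in> unit_cube")
  case True
  then show ?thesis using assms by (simp add: smoothed_hist_density_on_cube)
qed (simp add: smoothed_hist_density_def)

(* If counts differ by at most one, the affine values a c' + \<delta> and a c + \<delta>
   differ by at most the factor a / \<delta> + 1 (the worst case being c = 0). *)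
lemma affine_sensitivity_ratio:
  fixes a c c' \<delta> :: real
  assumes "0 < \<delta>" and "0 \<le> a" and "0 \<le> c" and "c' \<le> c + 1"
  shows "a * c' + \<delta> \<le> (a / \<delta> + 1) * (a * c + \<delta>)"
proof -
  have "a * c' + \<delta> \<le> a * (c + 1) + \<delta>"
    using assms by (simp add: mult_left_mono)
  also have "\<dots> \<le> (a / \<delta>) * (a * c) + a * (c + 1) + \<delta>"
    using assms by simp
  also have "\<dots> = (a / \<delta> + 1) * (a * c + \<delta>)"
    using assms by (simp add: field_simps)
  finally show ?thesis .
qed

lemma smoothed_hist_density_neighbour_ratio:
  fixes z :: "real ^ 'r" and x y :: "nat \<Rightarrow> real ^ 'r"
  assumes "0 < \<delta>" and "\<delta> < 1" and "N \<ge> 1" and "hamming n x y = 1"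
  shows "smoothed_hist_density \<delta> N n x z
           \<le> ((1 - \<delta>) * real (N ^ CARD('r)) / (real n * \<delta>) + 1) * smoothed_hist_density \<delta> N n y z"
proof (cases "z \<in> unit_cube")
  case True
  define a where "a = (1 - \<delta>) * real (N ^ CARD('r)) / real n"
  have "real (hist_count N n x z) \<le> real (hist_count N n y z) + 1"
    using hist_count_neighbour[OF assms(4), of N z] by linarith
  moreover have "0 \<le> a" unfolding a_def using assms by simp
  ultimately have "a * real (hist_count N n x z) + \<delta> \<le> (a / \<delta> + 1) * (a * real (hist_count N n y z) + \<delta>)"
    using assms(1) by (intro affine_sensitivity_ratio) auto
  then show ?thesis
    using True assms(3) by (simp add: smoothed_hist_density_on_cube a_def)
qed (simp add: smoothed_hist_density_def)

lemma finite_measure_density_bounded_support: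
  fixes g :: "'a::euclidean_space \<Rightarrow> real"
  assumes [measurable]: "g \<in> borel_measurable borel" and S: "S \<in> sets lborel"
    and S_fin: "emeasure lborel S < \<infinity>" and bound: "\<And>z. g z \<le> C * indicator S z"
  shows "finite_measure (density lborel (\<lambda>z. ennreal (g z)))"
proof
  have "emeasure (density lborel (\<lambda>z. ennreal (g z))) (space lborel) = (\<integral>\<^sup>+z. ennreal (g z) \<partial>lborel)"
    by (simp add: emeasure_density)
  also have "\<dots> \<le> (\<integral>\<^sup>+z. ennreal C * indicator S z \<partial>lborel)"
  proof (rule nn_integral_mono)
    fix z show "ennreal (g z) \<le> ennreal C * indicator S z"
      using bound[of z] by (cases "z \<in> S") (auto intro: ennreal_leI ennreal_neg)
  qed
  also have "\<dots> = ennreal C * emeasure lborel S"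
    using S by (simp add: nn_integral_cmult_indicator)
  also have "\<dots> < \<infinity>"
    using S_fin by (simp add: ennreal_mult_less_top)
  finally show "emeasure (density lborel (\<lambda>z. ennreal (g z))) (space (density lborel (\<lambda>z. ennreal (g z)))) \<noteq> \<infinity>"
    by simp
qed

(* The smoothed histogram is bounded by m + 1 on the cube, hence defines a finite
   measure (it is in fact a probability density, but finiteness is all we need). *)
lemma finite_measure_smoothed_hist_density:
  fixes x :: "nat \<Rightarrow> real ^ 'r"
  assumes "0 < \<delta>" and "\<delta> < 1" and "N \<ge> 1" and "n \<ge> 1"
  shows "finite_measure (density lborel (\<lambda>z. ennreal (smoothed_hist_density \<delta> N n x z)))"
proof (rule finite_measure_density_bounded_support)
  show "emeasure lborel (unit_cube :: (real ^ 'r) set) < \<infinity>"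
    unfolding unit_cube_def by (rule emeasure_lborel_cbox_finite)
  fix z :: "real ^ 'r"
  let ?m = "real (N ^ CARD('r))"
  show "smoothed_hist_density \<delta> N n x z \<le> (?m + 1) * indicator unit_cube z"
  proof (cases "z \<in> unit_cube")
    case True
    have "(1 - \<delta>) * ?m / real n * real (hist_count N n x z) \<le> 1 * ?m / real n * real n"
      using assms hist_count_le[of N n x z]
      by (intro mult_mono divide_right_mono mult_right_mono) auto
    with True assms show ?thesis by (simp add: smoothed_hist_density_on_cube)
  qed (simp add: smoothed_hist_density_def)
qed (simp_all add: unit_cube_def)

theorem mainTheorem4:
  fixes \<delta> \<alpha> :: real and N n k :: nat
  assumes "0 < \<delta>" and "\<delta> < 1"
    and "N \<ge> 2" and "n \<ge> 1"
    and "real k * ln ((1 - \<delta>) * real (N ^ CARD('r)) / (real n * \<delta>) + 1) \<le> \<alpha>"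
  shows "differentially_private \<alpha> n
           (hist_mechanism \<delta> N n k :: (nat \<Rightarrow> real ^ 'r) \<Rightarrow> (nat \<Rightarrow> real ^ 'r) measure)"
  unfolding differentially_private_def
proof (intro allI impI ballI)
  fix x y :: "nat \<Rightarrow> real ^ 'r" and B
  assume neighbours: "hamming n x y = 1" and B: "B \<in> sets (hist_mechanism \<delta> N n k x)"
  define L where "L = (1 - \<delta>) * real (N ^ CARD('r)) / (real n * \<delta>) + 1"
  have N1: "N \<ge> 1" using assms(3) by simp
  have L1: "1 \<le> L" unfolding L_def using assms(1,2) by simp
  let ?s = "smoothed_hist_density \<delta> N n"
  have ratio: "?s x z \<le> L * ?s y z" for z
    unfolding L_def using assms(1,2) N1 neighbours by (rule smoothed_hist_density_neighbour_ratio)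
  have nonneg: "0 \<le> ?s w z" for w z
    using assms(1,2) N1 by (rule smoothed_hist_density_nonneg)
  have finite: "finite_measure (density lborel (\<lambda>z. ennreal (?s w z)))" for w
    using assms(1,2) N1 assms(4) by (rule finite_measure_smoothed_hist_density)
  have "measure (hist_mechanism \<delta> N n k x) B \<le> L ^ card {..<k} * measure (hist_mechanism \<delta> N n k y) B"
    using B unfolding hist_mechanism_def
    by (intro measure_PiM_density_le lborel.sigma_finite_measure_axioms ratio nonneg finite
          finite_measure.axioms(1)[OF finite] smoothed_hist_density_measurable finite_lessThan)
       (use L1 in simp_all)
  also have "L ^ card {..<k} = exp (real k * ln L)"
    using L1 by (simp add: exp_of_nat_mult)
  also have "\<dots> \<le> exp \<alpha>"
    using assms(5) unfolding L_def by simp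
  finally show "measure (hist_mechanism \<delta> N n k x) B \<le> exp \<alpha> * measure (hist_mechanism \<delta> N n k y) B"
    by (simp add: mult_right_mono)
qed

end
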